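(* Two unital formal multiplications $F_1,F_2$ on $V$ are similar if and only if there exists a similarity $\Phi$ on $V$ such that $F_1(\mu\otimes\nu)=\sum F_2\big(\mu_{(1)}\otimes\Phi'(\mu_{(2)}\otimes\nu)\big)$ for all $\mu,\nu\in k[V]$ (i.e. $F_1(\mathbf{x},\mathbf{y})=F_2(\mathbf{x},\Phi(\mathbf{x},\mathbf{y}))$).
   Context: $k$ is a field of characteristic $0$; $k[V]$ is the symmetric algebra of $V$ with the coalgebra structure in which elements of $V$ are primitive, counit $\epsilon$ (degree-0 projection), $\pi_V$ the projection onto $V$, Sweedler notation; $k[V]_{\ge1}$ is the sum of symmetric powers of degree $\ge1$. A unital formal multiplication on $V$ is a linear map $F\colon k[V]\otimes k[V]\to V$ with $F(\mu\otimes1)=\pi_V(\mu)=F(1\otimes\mu)$. For a linear map $\Phi\colon k[V]\otimes k[V]\to V$ with $\Phi(1\otimes 1)=0$, $\Phi'(\xi)=\sum_{n\ge0}\frac1{n!}\Phi(\xi_{(1)})\cdots\Phi(\xi_{(n)})$ is the induced coalgebra morphism to $k[V]$. A similarity is a linear map $\Phi\colon k[V]\otimes k[V]\to V$ with $\Phi|_{1\otimes k[V]}=\pi_V$ and $\Phi|_{k[V]_{\ge1}\otimes(k1\oplus V)}=0$. Two unital formal multiplications are similar if their restrictions to $k[V]\otimes V$ coincide. *)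

theory Defs
  imports Main "HOL-Library.Poly_Mapping"
begin

(* V is modelled via a basis indexed by the type 'i:  V = 'i \<Rightarrow>\<^sub>0 'k.
   k[V] = polynomials in the variables x_i:  monomials 'i \<Rightarrow>\<^sub>0 nat,
   elements ('i \<Rightarrow>\<^sub>0 nat) \<Rightarrow>\<^sub>0 'k.
   A linear map k[V] \<otimes> k[V] \<rightarrow> V is given by its values on the basis
   x^a \<otimes> x^b of k[V] \<otimes> k[V]. *)

type_synonym 'i mon = "'i \<Rightarrow>\<^sub>0 nat"
type_synonym ('i,'k) vec = "'i \<Rightarrow>\<^sub>0 'k"
type_synonym ('i,'k) sym = "'i mon \<Rightarrow>\<^sub>0 'k"
type_synonym ('i,'k) bimap = "'i mon \<Rightarrow> 'i mon \<Rightarrow> ('i,'k) vec"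

definition mdeg :: "'i mon \<Rightarrow> nat" where
  "mdeg a = (\<Sum>i\<in>Poly_Mapping.keys a. Poly_Mapping.lookup a i)"

definition mfact :: "'i mon \<Rightarrow> nat" where
  "mfact a = (\<Prod>i\<in>Poly_Mapping.keys a. fact (Poly_Mapping.lookup a i))"

definition vsmul :: "'k::field \<Rightarrow> ('i,'k) vec \<Rightarrow> ('i,'k) vec" where
  "vsmul c v = Poly_Mapping.map (\<lambda>x. c * x) v"

definition psmul :: "'k::field \<Rightarrow> ('i,'k) sym \<Rightarrow> ('i,'k) sym" where
  "psmul c p = Poly_Mapping.map (\<lambda>x. c * x) p"

definition piV :: "'i mon \<Rightarrow> ('i,'k::field) vec" where
  "piV a = (if mdeg a = 1 then Poly_Mapping.map of_nat a else 0)"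

definition lin :: "('i,'k::field) vec \<Rightarrow> ('i,'k) sym" where
  "lin v = (\<Sum>i\<in>Poly_Mapping.keys v. Poly_Mapping.single (Poly_Mapping.single i 1) (Poly_Mapping.lookup v i))"

definition lin2 :: "('i,'k::field) bimap \<Rightarrow> ('i,'k) sym \<Rightarrow> ('i,'k) sym \<Rightarrow> ('i,'k) vec" where
  "lin2 F \<mu> \<nu> = (\<Sum>a\<in>Poly_Mapping.keys \<mu>. \<Sum>b\<in>Poly_Mapping.keys \<nu>. vsmul (Poly_Mapping.lookup \<mu> a * Poly_Mapping.lookup \<nu> b) (F a b))"

definition lin2r :: "('i,'k::field) bimap \<Rightarrow> 'i mon \<Rightarrow> ('i,'k) sym \<Rightarrow> ('i,'k) vec" where
  "lin2r F a p = (\<Sum>g\<in>Poly_Mapping.keys p. vsmul (Poly_Mapping.lookup p g) (F a g))"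

definition unital_formal_mult :: "('i,'k::field) bimap \<Rightarrow> bool" where
  "unital_formal_mult F \<longleftrightarrow> (\<forall>a. F a 0 = piV a \<and> F 0 a = piV a)"

definition similarity :: "('i,'k::field) bimap \<Rightarrow> bool" where
  "similarity \<Phi> \<longleftrightarrow> (\<forall>b. \<Phi> 0 b = piV b) \<and> (\<forall>a b. a \<noteq> 0 \<and> mdeg b \<le> 1 \<longrightarrow> \<Phi> a b = 0)"

(* restrictions to k[V] \<otimes> V coincide *)
definition similar :: "('i,'k::field) bimap \<Rightarrow> ('i,'k) bimap \<Rightarrow> bool" where
  "similar F1 F2 \<longleftrightarrow> (\<forall>a i. F1 a (Poly_Mapping.single i 1) = F2 a (Poly_Mapping.single i 1))"

(* n-fold decompositions of x^a \<otimes> x^b, indexing the (n-1)-fold iterated coproduct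
   Delta^(n)(x^a \<otimes> x^b) = sum (a!b!/prod (a_j! b_j!)) (x^a1\<otimes>x^b1) \<otimes> ... \<otimes> (x^an\<otimes>x^bn) *)
definition decomps :: "nat \<Rightarrow> 'i mon \<Rightarrow> 'i mon \<Rightarrow> ('i mon \<times> 'i mon) list set" where
  "decomps n a b = {ds. length ds = n \<and> sum_list (map fst ds) = a \<and> sum_list (map snd ds) = b}"

definition dcoef :: "'i mon \<Rightarrow> 'i mon \<Rightarrow> ('i mon \<times> 'i mon) list \<Rightarrow> 'k::field" where
  "dcoef a b ds = of_nat (mfact a * mfact b) / of_nat (prod_list (map (\<lambda>(x,y). mfact x * mfact y) ds))"

(* Phi'(x^a \<otimes> x^b) = sum_n 1/n! Phi(xi_(1)) ... Phi(xi_(n)).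
   Since Phi(1\<otimes>1) = 0 the terms with n > deg a + deg b vanish, so the sum is truncated there. *)
definition Phi' :: "('i,'k::field) bimap \<Rightarrow> 'i mon \<Rightarrow> 'i mon \<Rightarrow> ('i,'k) sym" where
  "Phi' \<Phi> a b = (\<Sum>n\<in>{..mdeg a + mdeg b}. \<Sum>ds\<in>decomps n a b.
      psmul (dcoef a b ds / of_nat (fact n)) (prod_list (map (\<lambda>(x,y). lin (\<Phi> x y)) ds)))"

(* basis value of  mu \<otimes> nu \<mapsto> sum F2(mu_(1) \<otimes> Phi'(mu_(2) \<otimes> nu)),
   using Delta(x^a) = sum_{a1+a2=a} a!/(a1! a2!) x^a1 \<otimes> x^a2 *)
definition twisted :: "('i,'k::field) bimap \<Rightarrow> ('i,'k) bimap \<Rightarrow> ('i,'k) bimap" where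
  "twisted F \<Phi> a b = (\<Sum>(a1,a2)\<in>{(a1,a2). a1 + a2 = a}.
      vsmul (of_nat (mfact a) / of_nat (mfact a1 * mfact a2)) (lin2r F a1 (Phi' \<Phi> a2 b)))"

end

theory Submission imports Defs "HOL-Library.FuncSet" begin

(* Write twisted F \<Phi> a b = F(x^a, \<Phi>'(1, x^b)) + Rt F \<Phi> a b, splitting off the
   coproduct term x^0 \<otimes> x^a of x^a.  Because F(1, -) = \<pi>_V and \<pi>_V \<circ> \<Phi>' = \<Phi>, the first
   summand is just \<Phi> a b, while the remainder Rt F \<Phi> a b only involves values \<Phi> c d with
   deg c < deg a.  Hence:
   (1) the equation F1 = twisted F2 \<Phi>, i.e. \<Phi> = F1 - Rt F2 \<Phi>, can always be solved for \<Phi>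
       by recursion on deg a;
   (2) whenever \<Phi> behaves like a similarity in degrees < deg a, every term of Rt F \<Phi> a b
       with mdeg b \<le> 1 vanishes except the leading one, so Rt F \<Phi> a b = F a b.
   For "similar \<Longrightarrow> \<exists>\<Phi>" we take the recursive solution of (1) and show by induction on the
   degree, using (2), that it is a similarity; for the converse, (2) gives
   twisted F2 \<Phi> a x_i = \<Phi> a x_i + F2 a x_i = F2 a x_i for a \<noteq> 0.  The file first collects facts about monomials,
   the inclusion V \<subseteq> k[V] and the coalgebra map \<Phi>', then proves the splitting, the locality
   and the evaluation (2) of Rt, the degree recursion, and finally the two directions. *)

(* the variable x_i as a monomial; written with Suc 0, the simp normal form of 1 :: nat *)
abbreviation xvar :: "'i \<Rightarrow> 'i mon" where
  "xvar i \<equiv> Poly_Mapping.single i (Suc 0)"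

lemma sum_eq_single: "finite A \<Longrightarrow> m \<in> A \<Longrightarrow> (\<And>x. x \<in> A \<Longrightarrow> x \<noteq> m \<Longrightarrow> f x = 0) \<Longrightarrow> sum f A = f m"
  by (simp add: sum.remove)

lemma prod_list_zero: "(0::'a::semiring_1) \<in> set xs \<Longrightarrow> prod_list xs = 0"
  by (induct xs) auto

lemma lookup_vsmul [simp]: "Poly_Mapping.lookup (vsmul c v) i = c * Poly_Mapping.lookup v i"
  by (simp add: vsmul_def map.rep_eq when_def)

lemma lookup_psmul [simp]: "Poly_Mapping.lookup (psmul c p) g = c * Poly_Mapping.lookup p g"
  by (simp add: psmul_def map.rep_eq when_def)

lemma vsmul_1 [simp]: "vsmul 1 v = v"
  by (rule poly_mapping_eqI) simp

lemma vsmul_0 [simp]: "vsmul c 0 = 0"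
  by (rule poly_mapping_eqI) simp

lemma psmul_1 [simp]: "psmul 1 p = p"
  by (rule poly_mapping_eqI) simp

lemma psmul_0 [simp]: "psmul c 0 = 0"
  by (rule poly_mapping_eqI) simp

lemma mdeg_superset:
  "finite S \<Longrightarrow> Poly_Mapping.keys a \<subseteq> S \<Longrightarrow> mdeg a = (\<Sum>i\<in>S. Poly_Mapping.lookup a i)"
  unfolding mdeg_def by (rule sum.mono_neutral_left) (auto simp: in_keys_iff)

lemma mdeg_add [simp]: "mdeg (a + b) = mdeg a + mdeg b"
proof -
  let ?S = "Poly_Mapping.keys a \<union> Poly_Mapping.keys b"
  have "mdeg (a + b) = (\<Sum>i\<in>?S. Poly_Mapping.lookup (a + b) i)"
    by (rule mdeg_superset) (auto dest: keys_add[THEN subsetD])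
  also have "\<dots> = (\<Sum>i\<in>?S. Poly_Mapping.lookup a i) + (\<Sum>i\<in>?S. Poly_Mapping.lookup b i)"
    by (simp add: lookup_add sum.distrib)
  also have "\<dots> = mdeg a + mdeg b"
    by (simp add: mdeg_superset[symmetric])
  finally show ?thesis .
qed

lemma mdeg_eq_0 [simp]: "mdeg a = 0 \<longleftrightarrow> a = 0"
  unfolding mdeg_def by (auto simp: in_keys_iff intro: poly_mapping_eqI)

lemma mdeg_0 [simp]: "mdeg 0 = 0"
  by (simp add: mdeg_def)

lemma mdeg_pos [simp]: "0 < mdeg a \<longleftrightarrow> a \<noteq> 0"
  using mdeg_eq_0[of a] by linarith

lemma mdeg_xvar [simp]: "mdeg (xvar i) = 1"
  by (simp add: mdeg_def)

lemma mdeg_le_sum_list: "x \<in> set xs \<Longrightarrow> mdeg x \<le> mdeg (sum_list xs)"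
  by (induct xs) auto

lemma length_le_mdeg_sum_list: "0 \<notin> set ys \<Longrightarrow> length ys \<le> mdeg (sum_list ys)"
proof (induct ys)
  case (Cons y ys)
  then have "1 \<le> mdeg y" by (cases "mdeg y") auto
  with Cons show ?case by simp
qed simp

lemma mdeg_1_xvar:
  assumes "mdeg g = 1" and "Poly_Mapping.lookup g i \<noteq> 0"
  shows "g = xvar i"
proof -
  have i: "i \<in> Poly_Mapping.keys g" using assms(2) by (simp add: in_keys_iff)
  have "mdeg g = Poly_Mapping.lookup g i + (\<Sum>j\<in>Poly_Mapping.keys g - {i}. Poly_Mapping.lookup g j)"
    unfolding mdeg_def using i by (simp add: sum.remove)
  with assms have gi: "Poly_Mapping.lookup g i = 1"
    and "(\<Sum>j\<in>Poly_Mapping.keys g - {i}. Poly_Mapping.lookup g j) = 0"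
    by linarith+
  then have "\<forall>j\<in>Poly_Mapping.keys g - {i}. Poly_Mapping.lookup g j = 0" by simp
  then have rest: "Poly_Mapping.lookup g j = 0" if "j \<noteq> i" for j
    using that by (metis DiffI in_keys_iff singletonD)
  with gi show ?thesis
    by (intro poly_mapping_eqI) (auto simp: lookup_single when_def)
qed

lemma mdeg_le_1_cases:
  assumes "mdeg b \<le> 1"
  obtains "b = 0" | i where "b = xvar i"
proof (cases "b = 0")
  case False
  then have "mdeg b = 1" using assms by (cases "mdeg b") auto
  moreover obtain i where "Poly_Mapping.lookup b i \<noteq> 0"
    using False by (metis poly_mapping_eqI lookup_zero)
  ultimately have "b = xvar i" by (rule mdeg_1_xvar)
  then show ?thesis by (rule that(2))
qed (rule that(1))

lemma xvar_eq_iff [simp]: "xvar i = xvar j \<longleftrightarrow> i = j"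
  by (metis lookup_single_eq lookup_single_not_eq Zero_not_Suc)

lemma finite_below_mon:
  "finite {a1 :: 'i mon. \<forall>i. Poly_Mapping.lookup a1 i \<le> Poly_Mapping.lookup a i}" (is "finite ?S")
proof -
  define h where "h a1 = restrict (Poly_Mapping.lookup a1) (Poly_Mapping.keys a)" for a1 :: "'i mon"
  have "h ` ?S \<subseteq> PiE (Poly_Mapping.keys a) (\<lambda>i. {..Poly_Mapping.lookup a i})"
    by (auto simp: h_def PiE_iff)
  then have "finite (h ` ?S)" by (rule finite_subset) (simp add: finite_PiE)
  moreover have "inj_on h ?S"
  proof (rule inj_onI, rule poly_mapping_eqI)
    fix x y i assume x: "x \<in> ?S" and y: "y \<in> ?S" and hxy: "h x = h y"
    show "Poly_Mapping.lookup x i = Poly_Mapping.lookup y i"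
    proof (cases "i \<in> Poly_Mapping.keys a")
      case True then show ?thesis using fun_cong[OF hxy, of i] by (simp add: h_def)
    next
      case False then show ?thesis using x y by (metis in_keys_iff le_zero_eq mem_Collect_eq)
    qed
  qed
  ultimately show ?thesis by (rule finite_imageD)
qed

lemma finite_splittings: "finite {(a1, a2). a1 + a2 = (a :: 'i mon)}"
proof (rule finite_subset)
  let ?S = "{a1 :: 'i mon. \<forall>i. Poly_Mapping.lookup a1 i \<le> Poly_Mapping.lookup a i}"
  show "{(a1, a2). a1 + a2 = a} \<subseteq> ?S \<times> ?S" by (auto simp: lookup_add)
  show "finite (?S \<times> ?S)" using finite_below_mon[of a] by simp
qed

lemma lookup_lin_xvar [simp]: "Poly_Mapping.lookup (lin v) (xvar i) = Poly_Mapping.lookup v i"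
proof -
  have "Poly_Mapping.lookup (lin v) (xvar i)
      = (\<Sum>j\<in>Poly_Mapping.keys v. if j = i then Poly_Mapping.lookup v j else 0)"
    unfolding lin_def lookup_sum by (intro sum.cong) (auto simp: lookup_single when_def)
  also have "\<dots> = Poly_Mapping.lookup v i" by (simp add: in_keys_iff)
  finally show ?thesis .
qed

lemma keys_lin: "g \<in> Poly_Mapping.keys (lin v) \<Longrightarrow> mdeg g = 1"
proof (rule ccontr)
  assume "mdeg g \<noteq> 1"
  then have "Poly_Mapping.lookup (lin v) g = 0"
    unfolding lin_def lookup_sum by (intro sum.neutral) (auto simp: lookup_single when_def)
  then show "g \<in> Poly_Mapping.keys (lin v) \<Longrightarrow> False" by (simp add: in_keys_iff)
qed

lemma keys_prod_lin:
  "g \<in> Poly_Mapping.keys (prod_list (map lin vs) :: ('i,'k::field) sym) \<Longrightarrow> mdeg g = length vs"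
proof (induct vs arbitrary: g)
  case (Cons v vs)
  then obtain a b where "g = a + b" "a \<in> Poly_Mapping.keys (lin v)"
    "b \<in> Poly_Mapping.keys (prod_list (map lin vs) :: ('i,'k) sym)"
    using keys_mult by fastforce
  with Cons.hyps keys_lin show ?case by fastforce
qed simp

lemma lin_0 [simp]: "lin 0 = 0"
  by (simp add: lin_def)

lemma lookup_piV:
  "Poly_Mapping.lookup (piV g) i = (if mdeg g = 1 then of_nat (Poly_Mapping.lookup g i) else 0)"
  by (simp add: piV_def map.rep_eq when_def)

lemma piV_0 [simp]: "piV 0 = 0"
  by (simp add: piV_def)

lemma piV_xvar [simp]: "piV (xvar i) = Poly_Mapping.single i (1::'k::field)"
  by (rule poly_mapping_eqI) (simp add: lookup_piV lookup_single when_def)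

lemma lin_single_1 [simp]: "lin (Poly_Mapping.single i (1::'k::field)) = Poly_Mapping.single (xvar i) 1"
  by (simp add: lin_def)

lemma lookup_lin2r_unit:
  fixes F :: "('i,'k::field) bimap"
  assumes unit: "\<And>g. F 0 g = piV g"
  shows "Poly_Mapping.lookup (lin2r F 0 p) i = Poly_Mapping.lookup p (xvar i)"
proof -
  have "Poly_Mapping.lookup (lin2r F 0 p) i
      = (\<Sum>g\<in>Poly_Mapping.keys p. Poly_Mapping.lookup p g * Poly_Mapping.lookup (piV g) i)"
    unfolding lin2r_def lookup_sum using unit by simp
  also have "\<dots> = (\<Sum>g\<in>Poly_Mapping.keys p. if g = xvar i then Poly_Mapping.lookup p g else 0)"
  proof (intro sum.cong refl)
    fix g
    show "Poly_Mapping.lookup p g * Poly_Mapping.lookup (piV g) i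
        = (if g = xvar i then Poly_Mapping.lookup p g else 0)"
    proof (cases "g = xvar i")
      case False
      then have "mdeg g = 1 \<Longrightarrow> Poly_Mapping.lookup g i = 0" using mdeg_1_xvar[of g i] by blast
      then have "Poly_Mapping.lookup (piV g :: ('i,'k) vec) i = 0" by (auto simp: lookup_piV)
      then show ?thesis using False by simp
    qed (simp add: lookup_piV)
  qed
  also have "\<dots> = Poly_Mapping.lookup p (xvar i)" by (simp add: in_keys_iff)
  finally show ?thesis .
qed

lemma lin2r_0 [simp]: "lin2r F a 0 = 0"
  by (simp add: lin2r_def)

lemma lin2r_single: "lin2r F a (Poly_Mapping.single g 1) = F a g"
  by (simp add: lin2r_def)

lemma lin2_eq_iff: "(\<forall>\<mu> \<nu>. lin2 F \<mu> \<nu> = lin2 G \<mu> \<nu>) \<longleftrightarrow> F = G"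
proof
  assume "\<forall>\<mu> \<nu>. lin2 F \<mu> \<nu> = lin2 G \<mu> \<nu>"
  then have "lin2 F (Poly_Mapping.single a 1) (Poly_Mapping.single b 1)
           = lin2 G (Poly_Mapping.single a 1) (Poly_Mapping.single b 1)" for a b
    by blast
  then show "F = G" by (intro ext) (simp add: lin2_def)
qed simp

subsection \<open>The coalgebra morphism \<Phi>'\<close>

lemma decomps_0: "decomps 0 a b = (if a = 0 \<and> b = 0 then {[]} else {})"
  by (auto simp: decomps_def)

lemma decomps_1: "decomps (Suc 0) a b = {[(a, b)]}"
  by (auto simp: decomps_def length_Suc_conv)

lemma mfact_0 [simp]: "mfact 0 = 1"
  by (simp add: mfact_def)

lemma mfact_nonzero [simp]: "mfact a \<noteq> 0"
  by (simp add: mfact_def)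

lemma dcoef_nil [simp]: "dcoef 0 0 [] = (1::'k::field_char_0)"
  by (simp add: dcoef_def)

lemma dcoef_single [simp]: "dcoef a b [(a, b)] = (1::'k::field_char_0)"
  by (simp add: dcoef_def)

lemma decomps_fst_mdeg: "ds \<in> decomps n a b \<Longrightarrow> (x, y) \<in> set ds \<Longrightarrow> mdeg x \<le> mdeg a"
  using mdeg_le_sum_list[of x "map fst ds"] by (force simp: decomps_def)

abbreviation Phi_term :: "('i,'k::field) bimap \<Rightarrow> ('i mon \<times> 'i mon) list \<Rightarrow> ('i,'k) sym" where
  "Phi_term \<Phi> ds \<equiv> prod_list (map (\<lambda>(x, y). lin (\<Phi> x y)) ds)"

lemma lookup_Phi_term_other:
  assumes "length ds \<noteq> mdeg g"
  shows "Poly_Mapping.lookup (Phi_term \<Phi> ds :: ('i,'k::field) sym) g = 0"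
proof -
  have eq: "map (\<lambda>(x, y). lin (\<Phi> x y)) ds = map lin (map (\<lambda>(x, y). \<Phi> x y) ds)"
    by (induct ds) auto
  have "g \<notin> Poly_Mapping.keys (prod_list (map lin (map (\<lambda>(x, y). \<Phi> x y) ds)) :: ('i,'k) sym)"
  proof
    assume "g \<in> Poly_Mapping.keys (prod_list (map lin (map (\<lambda>(x, y). \<Phi> x y) ds)) :: ('i,'k) sym)"
    then have "mdeg g = length (map (\<lambda>(x, y). \<Phi> x y) ds)" by (rule keys_prod_lin)
    with assms show False by simp
  qed
  then show ?thesis unfolding eq by (simp add: in_keys_iff)
qed

(* \<pi>_V \<circ> \<Phi>' = \<Phi>: only the n = 1 summand of \<Phi>' has a linear part *)
lemma lookup_Phi'_xvar:
  fixes \<Phi> :: "('i,'k::field_char_0) bimap"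
  assumes "\<Phi> 0 0 = 0"
  shows "Poly_Mapping.lookup (Phi' \<Phi> a b) (xvar i) = Poly_Mapping.lookup (\<Phi> a b) i"
proof -
  let ?T = "\<lambda>n. \<Sum>ds\<in>decomps n a b.
    (dcoef a b ds / of_nat (fact n)) * Poly_Mapping.lookup (Phi_term \<Phi> ds) (xvar i)"
  have sum: "Poly_Mapping.lookup (Phi' \<Phi> a b) (xvar i) = (\<Sum>n\<in>{..mdeg a + mdeg b}. ?T n)"
    unfolding Phi'_def lookup_sum by simp
  have others: "?T n = 0" if "n \<noteq> 1" for n
  proof (intro sum.neutral ballI)
    fix ds assume "ds \<in> decomps n a b"
    with that have "length ds \<noteq> mdeg (xvar i)" by (simp add: decomps_def)
    then show "(dcoef a b ds / of_nat (fact n)) * Poly_Mapping.lookup (Phi_term \<Phi> ds) (xvar i) = 0"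
      by (simp add: lookup_Phi_term_other)
  qed
  show ?thesis
  proof (cases "a = 0 \<and> b = 0")
    case True
    then show ?thesis using sum others[of 0] assms by simp
  next
    case False
    then have "mdeg a + mdeg b \<noteq> 0" by simp
    then have "1 \<in> {..mdeg a + mdeg b}" unfolding atMost_iff by linarith
    then have "(\<Sum>n\<in>{..mdeg a + mdeg b}. ?T n) = ?T 1"
      by (rule sum_eq_single[rotated]) (use others in auto)
    then show ?thesis using sum by (simp add: decomps_1)
  qed
qed

lemma Phi'_local:
  assumes "\<And>c d. mdeg c \<le> mdeg a \<Longrightarrow> \<Phi> c d = \<Psi> c d"
  shows "Phi' \<Phi> a b = Phi' \<Psi> a b"
  unfolding Phi'_def
proof (intro sum.cong refl arg_cong[where f = "psmul _"] arg_cong[where f = prod_list] map_cong)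
  fix n ds xy assume ds: "ds \<in> decomps n a b" and xy: "xy \<in> set ds"
  obtain x y where xy_eq: "xy = (x, y)" by fastforce
  have "mdeg x \<le> mdeg a" using decomps_fst_mdeg[OF ds] xy by (simp add: xy_eq)
  then show "(case xy of (x, y) \<Rightarrow> lin (\<Phi> x y)) = (case xy of (x, y) \<Rightarrow> lin (\<Psi> x y))"
    using assms by (simp add: xy_eq)
qed

definition similarity_below :: "nat \<Rightarrow> ('i,'k::field) bimap \<Rightarrow> bool" where
  "similarity_below n \<Phi> \<longleftrightarrow>
     (\<forall>c d. mdeg c < n \<longrightarrow> mdeg d \<le> 1 \<longrightarrow> \<Phi> c d = (if c = 0 then piV d else 0))"

lemma similarity_imp_below: "similarity \<Phi> \<Longrightarrow> similarity_below n \<Phi>"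
  by (simp add: similarity_def similarity_below_def)

lemma decomps_has_unit_factor:
  assumes ds: "ds \<in> decomps n a b" and b: "mdeg b \<le> 1" and n: "n \<noteq> mdeg b"
  shows "\<exists>x. (x, 0) \<in> set ds"
proof (rule ccontr)
  assume "\<nexists>x. (x, 0) \<in> set ds"
  then have "0 \<notin> set (map snd ds)" by force
  then have "n \<le> mdeg b"
    using ds length_le_mdeg_sum_list[of "map snd ds"] by (simp add: decomps_def)
  with b n have "n = 0" "mdeg b = 1" by auto
  with ds show False by (auto simp: decomps_def)
qed

lemma Phi'_low:
  fixes \<Phi> :: "('i,'k::field_char_0) bimap"
  assumes sim: "similarity_below (Suc (mdeg a)) \<Phi>" and b: "mdeg b \<le> 1"
  shows "Phi' \<Phi> a b = (if a = 0 then Poly_Mapping.single b 1 else 0)"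
proof -
  have sim': "\<Phi> c d = (if c = 0 then piV d else 0)" if "mdeg c \<le> mdeg a" "mdeg d \<le> 1" for c d
    using sim that by (simp add: similarity_below_def)
  let ?T = "\<lambda>n. \<Sum>ds\<in>decomps n a b. psmul (dcoef a b ds / of_nat (fact n)) (Phi_term \<Phi> ds)"
  have others: "?T n = 0" if n: "n \<noteq> mdeg b" for n
  proof (intro sum.neutral ballI)
    fix ds assume ds: "ds \<in> decomps n a b"
    then obtain x where x: "(x, 0) \<in> set ds" using decomps_has_unit_factor[OF ds b n] by blast
    then have "\<Phi> x 0 = 0" using sim' decomps_fst_mdeg[OF ds] by simp
    with x have "0 \<in> set (map (\<lambda>(x, y). lin (\<Phi> x y)) ds)" by force
    then show "psmul (dcoef a b ds / of_nat (fact n)) (Phi_term \<Phi> ds) = 0"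
      by (simp add: prod_list_zero)
  qed
  have "Phi' \<Phi> a b = ?T (mdeg b)"
    unfolding Phi'_def by (rule sum_eq_single) (use others b in auto)
  also have "\<dots> = (if a = 0 then Poly_Mapping.single b 1 else 0)"
    using b by (cases rule: mdeg_le_1_cases) (auto simp: decomps_0 decomps_1 sim')
  finally show ?thesis .
qed

subsection \<open>Splitting off the leading term of the twisted multiplication\<close>

definition Rt :: "('i,'k::field) bimap \<Rightarrow> ('i,'k) bimap \<Rightarrow> 'i mon \<Rightarrow> 'i mon \<Rightarrow> ('i,'k) vec" where
  "Rt F \<Phi> a b = (\<Sum>(a1, a2)\<in>{(a1, a2). a1 + a2 = a \<and> a1 \<noteq> 0}.
      vsmul (of_nat (mfact a) / of_nat (mfact a1 * mfact a2)) (lin2r F a1 (Phi' \<Phi> a2 b)))"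

(* F2(x, \<Phi>(x,y)) = \<Phi>(x,y) + higher terms: the a1 = 0 summand is \<pi>_V(\<Phi>'(x^a \<otimes> x^b)) *)
lemma twisted_split:
  fixes F \<Phi> :: "('i,'k::field_char_0) bimap"
  assumes unit: "\<And>g. F 0 g = piV g" and "\<Phi> 0 0 = 0"
  shows "twisted F \<Phi> a b = \<Phi> a b + Rt F \<Phi> a b"
proof -
  let ?f = "\<lambda>(a1, a2). vsmul (of_nat (mfact a) / of_nat (mfact a1 * mfact a2))
                          (lin2r F a1 (Phi' \<Phi> a2 b))"
  have "twisted F \<Phi> a b = ?f (0, a) + sum ?f ({(a1, a2). a1 + a2 = a} - {(0, a)})"
    unfolding twisted_def by (rule sum.remove[OF finite_splittings]) simp
  also have "{(a1, a2). a1 + a2 = a} - {(0, a)} = {(a1, a2). a1 + a2 = a \<and> a1 \<noteq> 0}"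
    by auto
  also have "?f (0, a) = \<Phi> a b"
    by (rule poly_mapping_eqI) (simp add: lookup_lin2r_unit[of F, OF unit] lookup_Phi'_xvar assms(2))
  finally show ?thesis unfolding Rt_def .
qed

lemma Rt_local:
  assumes "\<And>c d. mdeg c < mdeg a \<Longrightarrow> \<Phi> c d = \<Psi> c d"
  shows "Rt F \<Phi> a b = Rt F \<Psi> a b"
  unfolding Rt_def
proof (intro sum.cong refl)
  fix p assume "p \<in> {(a1, a2). a1 + a2 = a \<and> a1 \<noteq> 0}"
  then obtain a1 a2 where p: "p = (a1, a2)" "a1 + a2 = a" "a1 \<noteq> 0" by auto
  then have "mdeg a2 < mdeg a" by auto
  then have "Phi' \<Phi> a2 b = Phi' \<Psi> a2 b"
    by (intro Phi'_local assms) (rule le_less_trans)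
  then show "(case p of (a1, a2) \<Rightarrow> vsmul (of_nat (mfact a) / of_nat (mfact a1 * mfact a2))
               (lin2r F a1 (Phi' \<Phi> a2 b)))
           = (case p of (a1, a2) \<Rightarrow> vsmul (of_nat (mfact a) / of_nat (mfact a1 * mfact a2))
               (lin2r F a1 (Phi' \<Psi> a2 b)))"
    by (simp add: p)
qed

lemma Rt_0: "Rt F \<Phi> 0 b = 0"
  unfolding Rt_def by (rule sum.neutral) (auto dest!: arg_cong[where f = mdeg])

(* for a similarity-like \<Phi> below deg a only the term x^a \<otimes> 1 survives, which gives F a b *)
lemma Rt_low:
  fixes F \<Phi> :: "('i,'k::field_char_0) bimap"
  assumes a: "a \<noteq> 0" and sim: "similarity_below (mdeg a) \<Phi>" and b: "mdeg b \<le> 1"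
  shows "Rt F \<Phi> a b = F a b"
proof -
  let ?f = "\<lambda>(a1, a2). vsmul (of_nat (mfact a) / of_nat (mfact a1 * mfact a2))
                          (lin2r F a1 (Phi' \<Phi> a2 b))"
  have Phi'_a2: "Phi' \<Phi> a2 b = (if a2 = 0 then Poly_Mapping.single b 1 else 0)"
    if "a1 + a2 = a" "a1 \<noteq> 0" for a1 a2
  proof (rule Phi'_low[OF _ b])
    have "mdeg a2 < mdeg a" using that by auto
    then show "similarity_below (Suc (mdeg a2)) \<Phi>"
      using sim by (simp add: similarity_below_def)
  qed
  have "Rt F \<Phi> a b = ?f (a, 0)"
    unfolding Rt_def
  proof (rule sum_eq_single)
    show "finite {(a1, a2). a1 + a2 = a \<and> a1 \<noteq> 0}"
      by (rule finite_subset[OF _ finite_splittings[of a]]) auto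
    show "(a, 0) \<in> {(a1, a2). a1 + a2 = a \<and> a1 \<noteq> 0}" using a by simp
    fix p assume "p \<in> {(a1, a2). a1 + a2 = a \<and> a1 \<noteq> 0}" and not_top: "p \<noteq> (a, 0)"
    then obtain a1 a2 where p: "p = (a1, a2)" "a1 + a2 = a" "a1 \<noteq> 0" by auto
    have "a2 \<noteq> 0"
    proof
      assume "a2 = 0"
      with p(1,2) have "p = (a, 0)" by simp
      with not_top show False ..
    qed
    then have "Phi' \<Phi> a2 b = 0" using Phi'_a2[OF p(2,3)] by simp
    then show "?f p = 0" by (simp add: p(1))
  qed
  also have "\<dots> = F a b" using Phi'_a2[of a 0] a by (simp add: lin2r_single)
  finally show ?thesis .
qed

subsection \<open>Recursion on the degree\<close>

lemma measure_recursion: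
  fixes m :: "'a \<Rightarrow> nat" and R :: "('a \<Rightarrow> 'b \<Rightarrow> 'c) \<Rightarrow> 'a \<Rightarrow> 'b \<Rightarrow> 'c"
  assumes local: "\<And>\<Phi> \<Psi> a b. (\<And>c d. m c < m a \<Longrightarrow> \<Phi> c d = \<Psi> c d) \<Longrightarrow> R \<Phi> a b = R \<Psi> a b"
  shows "\<exists>\<Phi>. \<forall>a b. \<Phi> a b = R \<Phi> a b"
proof -
  define Rel where "Rel = inv_image less_than (\<lambda>p :: 'a \<times> 'b. m (fst p))"
  define g where "g = wfrec Rel (\<lambda>f p. R (\<lambda>c d. f (c, d)) (fst p) (snd p))"
  have "wf Rel" by (simp add: Rel_def)
  have g_eq: "g (a, b) = R (\<lambda>c d. g (c, d)) a b" for a b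
  proof -
    have "g (a, b) = R (\<lambda>c d. cut g Rel (a, b) (c, d)) a b"
      unfolding g_def by (subst wfrec[OF \<open>wf Rel\<close>]) simp
    also have "\<dots> = R (\<lambda>c d. g (c, d)) a b"
      by (rule local) (simp add: cut_apply Rel_def)
    finally show ?thesis .
  qed
  show ?thesis
    by (rule exI[where x = "\<lambda>c d. g (c, d)"], intro allI) (rule g_eq)
qed

lemma similar_low:
  fixes F1 F2 :: "('i,'k::field) bimap"
  assumes "unital_formal_mult F1" "unital_formal_mult F2" "similar F1 F2" "mdeg d \<le> 1"
  shows "F1 c d = F2 c d"
  using assms(4)
proof (cases rule: mdeg_le_1_cases)
  case 1
  then show ?thesis using assms(1,2) by (simp add: unital_formal_mult_def)
next
  case (2 i)
  then show ?thesis using assms(3) by (simp add: similar_def)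
qed

(* similar multiplications are related by the solution of \<Phi> = F1 - Rt F2 \<Phi> *)
lemma similar_imp_twisted:
  fixes F1 F2 :: "('i,'k::field_char_0) bimap"
  assumes U1: "unital_formal_mult F1" and U2: "unital_formal_mult F2" and sim: "similar F1 F2"
  shows "\<exists>\<Phi>. similarity \<Phi> \<and> F1 = twisted F2 \<Phi>"
proof -
  have "\<exists>\<Phi>. \<forall>a b. \<Phi> a b = F1 a b - Rt F2 \<Phi> a b"
  proof (rule measure_recursion[where m = mdeg])
    fix \<Phi> \<Psi> :: "('i,'k) bimap" and a b :: "'i mon"
    assume "\<And>c d. mdeg c < mdeg a \<Longrightarrow> \<Phi> c d = \<Psi> c d"
    from Rt_local[OF this] show "F1 a b - Rt F2 \<Phi> a b = F1 a b - Rt F2 \<Psi> a b" by simp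
  qed
  then obtain \<Phi> where \<Phi>: "\<And>a b. \<Phi> a b = F1 a b - Rt F2 \<Phi> a b" by blast
  have unit: "\<And>g. F1 0 g = piV g" "\<And>g. F2 0 g = piV g"
    using U1 U2 by (simp_all add: unital_formal_mult_def)
  have \<Phi>_unit: "\<Phi> 0 b = piV b" for b
    using \<Phi>[of 0 b] by (simp add: Rt_0 unit)
  have below: "similarity_below n \<Phi>" for n
  proof (induction n)
    case (Suc n)
    have top: "\<Phi> c d = 0" if c: "mdeg c = n" "c \<noteq> 0" and d: "mdeg d \<le> 1" for c d
    proof -
      have "Rt F2 \<Phi> c d = F2 c d"
        by (rule Rt_low[OF c(2) _ d]) (use Suc.IH c(1) in simp)
      then show ?thesis using \<Phi>[of c d] similar_low[OF U1 U2 sim d] by simp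
    qed
    show ?case
      unfolding similarity_below_def
    proof (intro allI impI)
      fix c d :: "'i mon" assume "mdeg c < Suc n" "mdeg d \<le> 1"
      then show "\<Phi> c d = (if c = 0 then piV d else 0)"
        using Suc.IH top \<Phi>_unit by (cases "mdeg c = n") (auto simp: similarity_below_def)
    qed
  qed (simp add: similarity_below_def)
  have "similarity \<Phi>"
    unfolding similarity_def
  proof (intro conjI allI impI)
    fix a b :: "'i mon" assume "a \<noteq> 0 \<and> mdeg b \<le> 1"
    then show "\<Phi> a b = 0" using below[of "Suc (mdeg a)"] by (simp add: similarity_below_def)
  qed (rule \<Phi>_unit)
  moreover have "F1 = twisted F2 \<Phi>"
  proof (intro ext)
    fix a b
    have "twisted F2 \<Phi> a b = \<Phi> a b + Rt F2 \<Phi> a b"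
      by (rule twisted_split) (simp_all add: unit \<Phi>_unit)
    then show "F1 a b = twisted F2 \<Phi> a b" using \<Phi>[of a b] by simp
  qed
  ultimately show ?thesis by blast
qed

lemma twisted_similar:
  fixes F \<Phi> :: "('i,'k::field_char_0) bimap"
  assumes U: "unital_formal_mult F" and sim: "similarity \<Phi>"
  shows "similar (twisted F \<Phi>) F"
  unfolding similar_def
proof (intro allI)
  fix a i
  have unit: "\<And>g. F 0 g = piV g" using U by (simp add: unital_formal_mult_def)
  have \<Phi>: "\<Phi> a (xvar i) = (if a = 0 then piV (xvar i) else 0)" "\<Phi> 0 0 = 0"
    using sim by (auto simp: similarity_def)
  have "twisted F \<Phi> a (xvar i) = \<Phi> a (xvar i) + Rt F \<Phi> a (xvar i)"
    by (rule twisted_split[of F \<Phi>, OF unit \<Phi>(2)])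
  also have "\<dots> = F a (xvar i)"
  proof (cases "a = 0")
    case True
    then show ?thesis using \<Phi>(1) by (simp add: Rt_0 unit)
  next
    case False
    then show ?thesis using \<Phi>(1) Rt_low[OF False similarity_imp_below[OF sim]] by simp
  qed
  finally show "twisted F \<Phi> a (Poly_Mapping.single i 1) = F a (Poly_Mapping.single i 1)" by simp
qed

theorem mainTheorem5:
  fixes F1 F2 :: "('i, 'k::field_char_0) bimap"
  assumes "unital_formal_mult F1" and "unital_formal_mult F2"
  shows "similar F1 F2 \<longleftrightarrow>
    (\<exists>\<Phi>. similarity \<Phi> \<and> (\<forall>\<mu> \<nu>. lin2 F1 \<mu> \<nu> = lin2 (twisted F2 \<Phi>) \<mu> \<nu>))"
  unfolding lin2_eq_iff
proof
  assume "similar F1 F2"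
  then show "\<exists>\<Phi>. similarity \<Phi> \<and> F1 = twisted F2 \<Phi>"
    using similar_imp_twisted assms by blast
next
  assume "\<exists>\<Phi>. similarity \<Phi> \<and> F1 = twisted F2 \<Phi>"
  then show "similar F1 F2"
    using twisted_similar[OF assms(2)] by blast
qed

end
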